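(* Let $k\ge 1$, let $A$ be a set of integers, each at least $3$, and let $O_k$ be the set of odd integers less than $2k+1$. Then, as $n\to\infty$, $$ex(n,C_{2k+1},\mathcal C_A)=\Theta\big(ex(n,C_{2k+1},\mathcal C_{A\setminus O_k})\big).$$
   Context: $C_k$ denotes the cycle with $k$ vertices; for a set $B$ of integers each at least 3, $\mathcal C_B=\{C_b:b\in B\}$. For a graph $H$ and a family of graphs $\mathcal F$, $ex(n,H,\mathcal F)$ is the maximum number of subgraphs isomorphic to $H$ in an $n$-vertex graph containing no member of $\mathcal F$ as a subgraph. *)

theory Defs
  imports Main "HOL-Library.Landau_Symbols"
begin

definition graph_on :: "nat \<Rightarrow> nat set set \<Rightarrow> bool" where
  "graph_on n E \<longleftrightarrow> (\<forall>e\<in>E. \<exists>u v. e = {u, v} \<and> u \<noteq> v \<and> u < n \<and> v < n)"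

definition cycle_edges :: "nat list \<Rightarrow> nat set set" where
  "cycle_edges vs = {{vs ! i, vs ! ((i + 1) mod length vs)} | i. i < length vs}"

(* The subgraphs of E isomorphic to C_k, identified with their edge sets. *)
definition cycle_copies :: "nat \<Rightarrow> nat set set \<Rightarrow> nat set set set" where
  "cycle_copies k E = {S. S \<subseteq> E \<and> (\<exists>vs. length vs = k \<and> distinct vs \<and> S = cycle_edges vs)}"

definition contains_cycle :: "nat \<Rightarrow> nat set set \<Rightarrow> bool" where
  "contains_cycle k E \<longleftrightarrow> cycle_copies k E \<noteq> {}"

definition ex_cycle :: "nat \<Rightarrow> nat \<Rightarrow> nat set \<Rightarrow> nat" where
  "ex_cycle n l B = Max {card (cycle_copies l E) | E. graph_on n E \<and> (\<forall>b\<in>B. \<not> contains_cycle b E)}"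

definition odd_below :: "nat \<Rightarrow> nat set" where
  "odd_below k = {m. odd m \<and> m < 2 * k + 1}"

end

(* Colour the vertices by residues mod q = 2k+1 and keep only the edges whose endpoints receive
   consecutive colours. Along a closed walk of length m in the kept graph each step changes the
   colour by +1 or -1 mod q, so the signs sum to a multiple of q of absolute value at most m;
   for m < q the sum is 0, which forces m to be even. Hence the kept graph has no odd cycle
   shorter than q, and it is C_A-free whenever the original graph is C_(A - O_k)-free.
   A fixed copy of C_q survives in at least q^(n-q) of the q^n colourings (give its i-th vertex
   colour i), so by averaging some colouring keeps a q^(-q) fraction of all copies of C_q.
   The reverse inequality is just monotonicity of ex in the forbidden family. *)

theory Submission
  imports Defs "HOL-Library.FuncSet" "HOL-Number_Theory.Cong"
begin

lemma graph_on_subset_Pow: "graph_on n E \<Longrightarrow> E \<subseteq> Pow {0..<n}"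
  unfolding graph_on_def by fastforce

lemma graph_on_finite: "graph_on n E \<Longrightarrow> finite E"
  using finite_subset[OF graph_on_subset_Pow] by simp

lemma graph_on_subset: "E' \<subseteq> E \<Longrightarrow> graph_on n E \<Longrightarrow> graph_on n E'"
  unfolding graph_on_def by blast

lemma finite_cycle_copies: "finite E \<Longrightarrow> finite (cycle_copies l E)"
  unfolding cycle_copies_def by (rule finite_subset[of _ "Pow E"]) auto

lemma cycle_copies_mono: "E' \<subseteq> E \<Longrightarrow> cycle_copies l E' \<subseteq> cycle_copies l E"
  unfolding cycle_copies_def by auto

lemma contains_cycle_mono: "E' \<subseteq> E \<Longrightarrow> contains_cycle l E' \<Longrightarrow> contains_cycle l E"
  unfolding contains_cycle_def using cycle_copies_mono by blast

lemma not_contains_cycle_empty: "0 < l \<Longrightarrow> \<not> contains_cycle l {}"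
  unfolding contains_cycle_def cycle_copies_def cycle_edges_def by auto

lemma cycle_vertices_less:
  assumes "graph_on n E" "cycle_edges vs \<subseteq> E"
  shows "set vs \<subseteq> {0..<n}"
proof
  fix x assume "x \<in> set vs"
  then obtain i where i: "i < length vs" "vs ! i = x" by (auto simp: in_set_conv_nth)
  then have "{x, vs ! ((i + 1) mod length vs)} \<in> E"
    using assms(2) unfolding cycle_edges_def by auto
  then show "x \<in> {0..<n}"
    using assms(1) unfolding graph_on_def by (auto simp: doubleton_eq_iff)
qed

lemma finite_ex_cycle_values:
  "finite {card (cycle_copies l E) | E. graph_on n E \<and> (\<forall>b\<in>B. \<not> contains_cycle b E)}"
proof -
  have "{card (cycle_copies l E) | E. graph_on n E \<and> (\<forall>b\<in>B. \<not> contains_cycle b E)}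
        \<subseteq> (\<lambda>E. card (cycle_copies l E)) ` Pow (Pow {0..<n})"
    using graph_on_subset_Pow by blast
  then show ?thesis by (rule finite_subset) simp
qed

lemma card_cycle_copies_le_ex_cycle:
  assumes "graph_on n E" "\<forall>b\<in>B. \<not> contains_cycle b E"
  shows "card (cycle_copies l E) \<le> ex_cycle n l B"
  unfolding ex_cycle_def using assms by (intro Max_ge[OF finite_ex_cycle_values]) blast

(* Length 0 must be excluded: cycle_edges [] = {}, so every graph contains C_0 and ex_cycle
   would be Max {}. *)
lemma ex_cycle_attained:
  assumes "\<forall>b\<in>B. 0 < b"
  obtains E where "graph_on n E" "\<forall>b\<in>B. \<not> contains_cycle b E"
    "ex_cycle n l B = card (cycle_copies l E)"
proof -
  have "{card (cycle_copies l E) | E. graph_on n E \<and> (\<forall>b\<in>B. \<not> contains_cycle b E)} \<noteq> {}"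
    using assms not_contains_cycle_empty unfolding graph_on_def by blast
  from Max_in[OF finite_ex_cycle_values this] show ?thesis
    using that unfolding ex_cycle_def by blast
qed

lemma ex_cycle_antimono:
  assumes "B \<subseteq> B'" "\<forall>b\<in>B'. 0 < b"
  shows "ex_cycle n l B' \<le> ex_cycle n l B"
proof -
  obtain E where "graph_on n E" "\<forall>b\<in>B'. \<not> contains_cycle b E"
    "ex_cycle n l B' = card (cycle_copies l E)"
    using ex_cycle_attained[OF assms(2)] .
  then show ?thesis using assms(1) card_cycle_copies_le_ex_cycle[of n E B l] by auto
qed

lemma sum_cyclic_differences:
  fixes x :: "nat \<Rightarrow> 'a :: ab_group_add"
  shows "(\<Sum>i<m. x ((i + 1) mod m) - x i) = 0"
proof (cases m)
  case (Suc m')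
  have "(\<Sum>i<m'. x ((i + 1) mod m) - x i) = (\<Sum>i<m'. x (Suc i) - x i)"
    using Suc by (intro sum.cong refl) simp
  moreover have "x ((m' + 1) mod m) = x 0" using Suc by simp
  ultimately show ?thesis
    using Suc by (simp only: sum.lessThan_Suc sum_lessThan_telescope) simp
qed simp

lemma even_sum_signs_iff:
  fixes s :: "nat \<Rightarrow> int"
  assumes "\<forall>i<m. s i = 1 \<or> s i = -1"
  shows "even (\<Sum>i<m. s i) \<longleftrightarrow> even m"
  using assms
proof (induction m)
  case (Suc m)
  then have "odd (s m)" by auto
  with Suc show ?case by simp
qed simp

lemma abs_sum_signs_le:
  fixes s :: "nat \<Rightarrow> int"
  assumes "\<forall>i<m. s i = 1 \<or> s i = -1"
  shows "\<bar>\<Sum>i<m. s i\<bar> \<le> int m"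
  using assms by (induction m) (auto simp: abs_le_iff)

lemma even_if_signs_sum_divisible:
  fixes s :: "nat \<Rightarrow> int"
  assumes signs: "\<forall>i<m. s i = 1 \<or> s i = -1"
    and dvd: "int q dvd (\<Sum>i<m. s i)" and "m < q"
  shows "even m"
proof -
  have "\<bar>\<Sum>i<m. s i\<bar> < int q"
    using abs_sum_signs_le[OF signs] \<open>m < q\<close> by linarith
  then have "(\<Sum>i<m. s i) = 0"
    using dvd_imp_le_int[OF _ dvd] by fastforce
  then show ?thesis using even_sum_signs_iff[OF signs] by simp
qed

definition step_edges :: "nat \<Rightarrow> (nat \<Rightarrow> nat) \<Rightarrow> nat set set \<Rightarrow> nat set set" where
  "step_edges q c E = {e \<in> E. \<exists>u v. e = {u, v} \<and> c v = (c u + 1) mod q}"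

lemma step_edge_sign:
  assumes "{a, b} = {u, v}" "c v = (c u + 1) mod q"
  shows "\<exists>s. (s = 1 \<or> s = -1) \<and> [int (c b) - int (c a) = s] (mod int q)"
proof -
  have "[int (c v) = int (c u) + 1] (mod int q)"
    using assms(2) by (simp add: cong_def zmod_int add.commute)
  from cong_diff[OF this cong_refl[of "int (c u)"]] cong_diff[OF cong_refl[of "int (c u)"] this]
  have "[int (c v) - int (c u) = 1] (mod int q)" "[int (c u) - int (c v) = -1] (mod int q)"
    by simp_all
  then show ?thesis using assms(1) by (auto simp: doubleton_eq_iff)
qed

lemma step_edges_no_short_odd_cycle:
  assumes "odd m" "m < q"
  shows "\<not> contains_cycle m (step_edges q c E)"
proof
  assume "contains_cycle m (step_edges q c E)"
  then obtain vs where len: "length vs = m" and sub: "cycle_edges vs \<subseteq> step_edges q c E"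
    unfolding contains_cycle_def cycle_copies_def by auto
  define x where "x i = int (c (vs ! i))" for i
  have "\<exists>s. (s = 1 \<or> s = -1) \<and> [x ((i + 1) mod m) - x i = s] (mod int q)" if "i < m" for i
  proof -
    have "{vs ! i, vs ! ((i + 1) mod m)} \<in> step_edges q c E"
      using sub that len unfolding cycle_edges_def by auto
    then obtain u v where "{vs ! i, vs ! ((i + 1) mod m)} = {u, v}" "c v = (c u + 1) mod q"
      unfolding step_edges_def by blast
    then show ?thesis unfolding x_def by (rule step_edge_sign)
  qed
  then obtain s where s: "\<forall>i<m. (s i = 1 \<or> s i = -1) \<and> [x ((i + 1) mod m) - x i = s i] (mod int q)"
    by metis
  have "[(\<Sum>i<m. x ((i + 1) mod m) - x i) = (\<Sum>i<m. s i)] (mod int q)"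
    using s by (intro cong_sum) auto
  then have "[0 = (\<Sum>i<m. s i)] (mod int q)"
    by (simp only: sum_cyclic_differences)
  then have "int q dvd (\<Sum>i<m. s i)"
    using cong_0_iff cong_sym by blast
  then have "even m" using even_if_signs_sum_divisible s \<open>m < q\<close> by blast
  with \<open>odd m\<close> show False by simp
qed

lemma card_PiE_le_card_prescribed:
  assumes "finite I" "finite B" "J \<subseteq> I" "\<forall>x\<in>J. f x \<in> B"
  shows "card B ^ card (I - J) \<le> card {c \<in> PiE I (\<lambda>_. B). \<forall>x\<in>J. c x = f x}"
proof -
  define extend where "extend g = (\<lambda>x. if x \<in> J then f x else g x)" for g :: "'a \<Rightarrow> 'b"
  have "inj_on extend (PiE (I - J) (\<lambda>_. B))"
  proof (rule inj_onI)
    fix g h assume g: "g \<in> PiE (I - J) (\<lambda>_. B)" and h: "h \<in> PiE (I - J) (\<lambda>_. B)"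
      and eq: "extend g = extend h"
    show "g = h"
    proof (rule PiE_ext[OF g h])
      fix x assume "x \<in> I - J"
      then show "g x = h x" using fun_cong[OF eq, of x] by (simp add: extend_def)
    qed
  qed
  moreover have "extend ` PiE (I - J) (\<lambda>_. B) \<subseteq> {c \<in> PiE I (\<lambda>_. B). \<forall>x\<in>J. c x = f x}"
    using assms(3,4) by (auto simp: extend_def PiE_iff extensional_def)
  moreover have "finite (PiE I (\<lambda>_. B))"
    using assms(1,2) by (simp add: finite_PiE)
  ultimately have "card (PiE (I - J) (\<lambda>_. B)) \<le> card {c \<in> PiE I (\<lambda>_. B). \<forall>x\<in>J. c x = f x}"
    by (intro card_inj_on_le) auto
  then show ?thesis using assms(1) by (simp add: card_PiE)
qed

lemma cycle_copy_survives_many_colourings: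
  assumes "graph_on n E" "S \<in> cycle_copies q E"
  shows "q ^ (n - q) \<le> card {c \<in> PiE {0..<n} (\<lambda>_. {0..<q}). S \<subseteq> step_edges q c E}"
proof -
  obtain vs where S: "S \<subseteq> E" "length vs = q" "distinct vs" "S = cycle_edges vs"
    using assms(2) unfolding cycle_copies_def by auto
  have vs_less: "set vs \<subseteq> {0..<n}"
    using cycle_vertices_less[OF assms(1)] S by blast
  define position where "position = the_inv_into {..<q} ((!) vs)"
  have inj: "inj_on ((!) vs) {..<q}" using S(2,3) by (simp add: inj_on_nth)
  have position_nth: "position (vs ! i) = i" if "i < q" for i
    unfolding position_def using the_inv_into_f_f[OF inj] that by simp
  have position_less: "\<forall>x\<in>set vs. position x \<in> {0..<q}"
    using position_nth S(2) by (auto simp: in_set_conv_nth)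
  have "card ({0..<n} - set vs) = n - q"
    using card_Diff_subset[OF finite_set vs_less] distinct_card[OF S(3)] S(2) by simp
  then have "q ^ (n - q) \<le> card {c \<in> PiE {0..<n} (\<lambda>_. {0..<q}). \<forall>x\<in>set vs. c x = position x}"
    using card_PiE_le_card_prescribed[OF _ _ vs_less position_less] by simp
  also have "\<dots> \<le> card {c \<in> PiE {0..<n} (\<lambda>_. {0..<q}). S \<subseteq> step_edges q c E}"
  proof (rule card_mono)
    show "finite {c \<in> PiE {0..<n} (\<lambda>_. {0..<q}). S \<subseteq> step_edges q c E}"
      by (simp add: finite_PiE)
    show "{c \<in> PiE {0..<n} (\<lambda>_. {0..<q}). \<forall>x\<in>set vs. c x = position x}
        \<subseteq> {c \<in> PiE {0..<n} (\<lambda>_. {0..<q}). S \<subseteq> step_edges q c E}"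
    proof safe
      fix c e assume c: "\<forall>x\<in>set vs. c x = position x" and "e \<in> S"
      then obtain i where i: "i < q" "e = {vs ! i, vs ! ((i + 1) mod q)}"
        using S unfolding cycle_edges_def by auto
      then have "c (vs ! ((i + 1) mod q)) = (c (vs ! i) + 1) mod q"
        using c position_nth S(2) by simp
      then show "e \<in> step_edges q c E"
        using \<open>e \<in> S\<close> S(1) i(2) unfolding step_edges_def by blast
    qed
  qed
  finally show ?thesis .
qed

lemma exists_large_fibre:
  assumes "finite X" "X \<noteq> {}" "finite Y" "\<forall>y\<in>Y. N \<le> card {x \<in> X. R x y}"
  shows "\<exists>x\<in>X. card Y * N \<le> card X * card {y \<in> Y. R x y}"
proof (rule ccontr)
  assume "\<not> ?thesis"
  then have small: "card X * card {y \<in> Y. R x y} < card Y * N" if "x \<in> X" for x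
    using that by (simp add: not_le)
  have "card Y * N = (\<Sum>y\<in>Y. N)" by simp
  also have "\<dots> \<le> (\<Sum>y\<in>Y. card {x \<in> X. R x y})"
    by (rule sum_mono) (use assms(4) in blast)
  also have "\<dots> = (\<Sum>x\<in>X. card {y \<in> Y. R x y})"
    using sum_multicount_gen[OF assms(1,3), of R "\<lambda>y. card {x \<in> X. R x y}"] by simp
  finally have "card X * (card Y * N) \<le> card X * (\<Sum>x\<in>X. card {y \<in> Y. R x y})"
    by simp
  also have "\<dots> = (\<Sum>x\<in>X. card X * card {y \<in> Y. R x y})"
    by (rule sum_distrib_left)
  also have "\<dots> < (\<Sum>x\<in>X. card Y * N)"
    using small by (rule sum_strict_mono[OF assms(1,2)])
  finally show False by simp
qed

lemma exists_colouring_keeping_many_cycles: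
  assumes "graph_on n E" "0 < q"
  obtains c where "card (cycle_copies q E) \<le> q ^ q * card (cycle_copies q (step_edges q c E))"
proof -
  let ?F = "PiE {0..<n} (\<lambda>_. {0..<q})" and ?C = "cycle_copies q E"
  have F: "finite ?F" "?F \<noteq> {}" "card ?F = q ^ n"
    using assms(2) by (simp_all add: finite_PiE PiE_eq_empty_iff card_PiE)
  have C: "finite ?C"
    by (rule finite_cycle_copies[OF graph_on_finite[OF assms(1)]])
  have "\<forall>S\<in>?C. q ^ (n - q) \<le> card {c \<in> ?F. S \<subseteq> step_edges q c E}"
    using cycle_copy_survives_many_colourings[OF assms(1)] by blast
  from exists_large_fibre[OF F(1,2) C this] obtain c
    where c: "card ?C * q ^ (n - q) \<le> q ^ n * card {S \<in> ?C. S \<subseteq> step_edges q c E}"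
    unfolding F(3) by blast
  let ?K = "card (cycle_copies q (step_edges q c E))"
  have "finite (step_edges q c E)"
    using graph_on_finite[OF assms(1)] by (simp add: step_edges_def)
  moreover have "{S \<in> ?C. S \<subseteq> step_edges q c E} \<subseteq> cycle_copies q (step_edges q c E)"
    unfolding cycle_copies_def by auto
  ultimately have kept: "card {S \<in> ?C. S \<subseteq> step_edges q c E} \<le> ?K"
    by (intro card_mono finite_cycle_copies)
  have "q ^ n \<le> q ^ (n - q) * q ^ q"
    unfolding power_add[symmetric] using assms(2) by (intro power_increasing) auto
  then have "card ?C * q ^ (n - q) \<le> (q ^ (n - q) * q ^ q) * ?K"
    using c kept by (meson mult_le_mono order_trans)
  also have "\<dots> = (q ^ q * ?K) * q ^ (n - q)"
    by (simp only: ac_simps)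
  finally have "card ?C \<le> q ^ q * ?K"
    using assms(2) by (simp only: mult_le_cancel2) simp
  then show ?thesis by (rule that)
qed

lemma ex_cycle_without_short_odd_le:
  assumes "\<forall>a\<in>A. 0 < a" "0 < q"
  shows "ex_cycle n q (A - {m. odd m \<and> m < q}) \<le> q ^ q * ex_cycle n q A"
proof -
  have "\<forall>b\<in>A - {m. odd m \<and> m < q}. 0 < b" using assms(1) by blast
  then obtain E where E: "graph_on n E" "\<forall>b\<in>A - {m. odd m \<and> m < q}. \<not> contains_cycle b E"
      "ex_cycle n q (A - {m. odd m \<and> m < q}) = card (cycle_copies q E)"
    by (rule ex_cycle_attained)
  obtain c where c: "card (cycle_copies q E) \<le> q ^ q * card (cycle_copies q (step_edges q c E))"
    using exists_colouring_keeping_many_cycles[OF E(1) assms(2)] .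
  have sub: "step_edges q c E \<subseteq> E" unfolding step_edges_def by auto
  have "\<forall>b\<in>A. \<not> contains_cycle b (step_edges q c E)"
    using E(2) contains_cycle_mono[OF sub] step_edges_no_short_odd_cycle by blast
  then have "card (cycle_copies q (step_edges q c E)) \<le> ex_cycle n q A"
    by (rule card_cycle_copies_le_ex_cycle[OF graph_on_subset[OF sub E(1)]])
  then have "q ^ q * card (cycle_copies q (step_edges q c E)) \<le> q ^ q * ex_cycle n q A"
    by simp
  with c E(3) show ?thesis by linarith
qed

theorem lemma2:
  fixes k :: nat and A :: "nat set"
  assumes "k \<ge> 1" and "\<forall>a\<in>A. a \<ge> 3"
  shows "(\<lambda>n. real (ex_cycle n (2 * k + 1) A))
           \<in> \<Theta>(\<lambda>n. real (ex_cycle n (2 * k + 1) (A - odd_below k)))"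
proof -
  define q where "q = 2 * k + 1"
  have "0 < q" by (simp add: q_def)
  have A_pos: "\<forall>a\<in>A. 0 < a" using assms(2) by fastforce
  have lower: "ex_cycle n q A \<le> ex_cycle n q (A - odd_below k)" for n
    using ex_cycle_antimono[OF Diff_subset A_pos] .
  have upper: "ex_cycle n q (A - odd_below k) \<le> q ^ q * ex_cycle n q A" for n
    unfolding odd_below_def q_def[symmetric] using ex_cycle_without_short_odd_le[OF A_pos \<open>0 < q\<close>] .
  show ?thesis unfolding q_def[symmetric]
  proof (rule bigthetaI)
    show "(\<lambda>n. real (ex_cycle n q A)) \<in> O(\<lambda>n. real (ex_cycle n q (A - odd_below k)))"
      using lower by (intro landau_o.bigI[of 1] always_eventually allI) simp_all
    have "(\<lambda>n. real (ex_cycle n q (A - odd_below k))) \<in> O(\<lambda>n. real (ex_cycle n q A))"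
      using upper \<open>0 < q\<close> by (intro landau_o.bigI[of "real (q ^ q)"] always_eventually allI)
        (simp_all del: of_nat_power flip: of_nat_mult)
    then show "(\<lambda>n. real (ex_cycle n q A)) \<in> \<Omega>(\<lambda>n. real (ex_cycle n q (A - odd_below k)))"
      by (simp add: bigomega_iff_bigo)
  qed
qed

end
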